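(* Let $\succcurlyeq$ be a preference relation on the set $\mathcal{B}$ of bets over a propositional language $\mathcal{L}$. The following are equivalent: (1) $\succcurlyeq$ satisfies Non-Triviality, Objective Expected Utility and Equivalence; (2) $\succcurlyeq$ is represented by a subjective model of uncertainty $(\Omega,t,\lambda)$ with $t$ exact and $\lambda$ additive; (3) $\succcurlyeq$ is represented by a subjective model of uncertainty $(\Omega',t',\lambda')$ with $t'$ sound.
   Context: Let $\mathbb{P}$ be a set of propositional variables containing two distinguished propositions $\mathbf{T}$ and $\mathbf{F}$, and $\mathcal{L}$ the language generated from $\mathbb{P}$ by $\neg,\land,\lor$. Write $\phi\implies\psi$ if $\psi$ can be deduced from $\phi$ in classical propositional logic (with $\mathbf{T}$ read as true and $\mathbf{F}$ as false), and $\phi\iff\psi$ if $\phi\implies\psi$ and $\psi\implies\phi$. A bet is a finitely supported $b:\mathcal{L}\to[0,1]$ with $\sum_\phi b(\phi)=1$; $b_\phi$ is the bet with $b_\phi(\phi)=1$. The set $\mathcal{B}$ of bets is a mixture space under pointwise mixtures; $\succcurlyeq$ is a relation on $\mathcal{B}$ with parts $\sim,\succ$. A truth valuation on a set $\Omega$ is $t:\mathcal{L}\to 2^\Omega$ with $t(\mathbf{T})=\Omega$, $t(\mathbf{F})=\emptyset$. It is exact if $\phi\iff\psi$ implies $t(\phi)=t(\psi)$; monotone if $\phi\implies\psi$ implies $t(\phi)\subseteq t(\psi)$; symmetric if $t(\neg\phi)=\Omega\setminus t(\phi)$; $\land$-distributive if $t(\phi\land\psi)=t(\phi)\cap t(\psi)$;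 sound if it is exact, monotone, symmetric and $\land$-distributive. A likelihood appraisal on a field $\Sigma\subseteq 2^\Omega$ is $\lambda:\Sigma\to[0,1]$ with $\lambda(\emptyset)=0,\lambda(\Omega)=1$ (no other condition); it is additive if finitely additive on disjoint sets. A subjective model of uncertainty $(\Omega,t,\lambda)$ has $t$ a truth valuation and $\lambda$ a likelihood appraisal on a field containing $t(\mathcal{L})$; it represents $\succcurlyeq$ if $b\succcurlyeq b'$ iff $\sum_\phi b(\phi)\lambda(t(\phi))\ge\sum_\phi b'(\phi)\lambda(t(\phi))$. Axioms: Non-Triviality: $b_{\mathbf{T}}\succcurlyeq b_\phi\succcurlyeq b_{\mathbf{F}}$ for all $\phi$ and $b_{\mathbf{T}}\succ b_{\mathbf{F}}$. Objective Expected Utility: $\succcurlyeq$ is complete, transitive, Archimedean and satisfies Independence. Equivalence: if $\psi\iff\phi$ then $b_\psi\sim b_\phi$. *)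

theory Defs
  imports "HOL-Analysis.Analysis"
begin

datatype 'p form = Atom 'p | Neg "'p form" | Conj "'p form" "'p form" | Disj "'p form" "'p form"

primrec eval :: "('p \<Rightarrow> bool) \<Rightarrow> 'p form \<Rightarrow> bool" where
  "eval v (Atom p) = v p"
| "eval v (Neg a) = (\<not> eval v a)"
| "eval v (Conj a b) = (eval v a \<and> eval v b)"
| "eval v (Disj a b) = (eval v a \<or> eval v b)"

text \<open>Classical consequence with the proposition TT read as true and FF as false
  (semantic consequence; equals derivability by soundness and completeness).\<close>
definition admissible :: "'p \<Rightarrow> 'p \<Rightarrow> ('p \<Rightarrow> bool) \<Rightarrow> bool" where
  "admissible TT FF v \<longleftrightarrow> v TT \<and> \<not> v FF"

definition entails :: "'p \<Rightarrow> 'p \<Rightarrow> 'p form \<Rightarrow> 'p form \<Rightarrow> bool" where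
  "entails TT FF a b \<longleftrightarrow> (\<forall>v. admissible TT FF v \<longrightarrow> eval v a \<longrightarrow> eval v b)"

definition equivf :: "'p \<Rightarrow> 'p \<Rightarrow> 'p form \<Rightarrow> 'p form \<Rightarrow> bool" where
  "equivf TT FF a b \<longleftrightarrow> entails TT FF a b \<and> entails TT FF b a"

definition supp :: "('p form \<Rightarrow> real) \<Rightarrow> 'p form set" where
  "supp b = {a. b a \<noteq> 0}"

definition is_bet :: "('p form \<Rightarrow> real) \<Rightarrow> bool" where
  "is_bet b \<longleftrightarrow> finite (supp b) \<and> (\<forall>a. 0 \<le> b a \<and> b a \<le> 1) \<and> sum b (supp b) = 1"

definition bets :: "('p form \<Rightarrow> real) set" where
  "bets = {b. is_bet b}"

definition bet_on :: "'p form \<Rightarrow> ('p form \<Rightarrow> real)" where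
  "bet_on a = (\<lambda>c. if c = a then 1 else 0)"

definition mix :: "real \<Rightarrow> ('p form \<Rightarrow> real) \<Rightarrow> ('p form \<Rightarrow> real) \<Rightarrow> ('p form \<Rightarrow> real)" where
  "mix \<alpha> b b' = (\<lambda>a. \<alpha> * b a + (1 - \<alpha>) * b' a)"

type_synonym 'p pref = "('p form \<Rightarrow> real) \<Rightarrow> ('p form \<Rightarrow> real) \<Rightarrow> bool"

definition strict :: "'p pref \<Rightarrow> ('p form \<Rightarrow> real) \<Rightarrow> ('p form \<Rightarrow> real) \<Rightarrow> bool" where
  "strict R b b' \<longleftrightarrow> R b b' \<and> \<not> R b' b"

definition indiff :: "'p pref \<Rightarrow> ('p form \<Rightarrow> real) \<Rightarrow> ('p form \<Rightarrow> real) \<Rightarrow> bool" where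
  "indiff R b b' \<longleftrightarrow> R b b' \<and> R b' b"

definition non_triviality :: "'p \<Rightarrow> 'p \<Rightarrow> 'p pref \<Rightarrow> bool" where
  "non_triviality TT FF R \<longleftrightarrow>
     (\<forall>a. R (bet_on (Atom TT)) (bet_on a) \<and> R (bet_on a) (bet_on (Atom FF)))
     \<and> strict R (bet_on (Atom TT)) (bet_on (Atom FF))"

definition complete_pref :: "'p pref \<Rightarrow> bool" where
  "complete_pref R \<longleftrightarrow> (\<forall>b\<in>bets. \<forall>b'\<in>bets. R b b' \<or> R b' b)"

definition transitive_pref :: "'p pref \<Rightarrow> bool" where
  "transitive_pref R \<longleftrightarrow>
     (\<forall>b\<in>bets. \<forall>b'\<in>bets. \<forall>b''\<in>bets. R b b' \<longrightarrow> R b' b'' \<longrightarrow> R b b'')"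

definition archimedean_pref :: "'p pref \<Rightarrow> bool" where
  "archimedean_pref R \<longleftrightarrow>
     (\<forall>b\<in>bets. \<forall>b'\<in>bets. \<forall>b''\<in>bets. strict R b b' \<longrightarrow> strict R b' b'' \<longrightarrow>
        (\<exists>\<alpha>\<in>{0<..<1}. \<exists>\<beta>\<in>{0<..<1}.
           strict R (mix \<alpha> b b'') b' \<and> strict R b' (mix \<beta> b b'')))"

definition independence_pref :: "'p pref \<Rightarrow> bool" where
  "independence_pref R \<longleftrightarrow>
     (\<forall>b\<in>bets. \<forall>b'\<in>bets. \<forall>b''\<in>bets. \<forall>\<alpha>\<in>{0<..<1}.
        R b b' \<longleftrightarrow> R (mix \<alpha> b b'') (mix \<alpha> b' b''))"

definition objective_expected_utility :: "'p pref \<Rightarrow> bool" where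
  "objective_expected_utility R \<longleftrightarrow>
     complete_pref R \<and> transitive_pref R \<and> archimedean_pref R \<and> independence_pref R"

definition equivalence_axiom :: "'p \<Rightarrow> 'p \<Rightarrow> 'p pref \<Rightarrow> bool" where
  "equivalence_axiom TT FF R \<longleftrightarrow>
     (\<forall>a c. equivf TT FF c a \<longrightarrow> indiff R (bet_on c) (bet_on a))"

definition truth_valuation :: "'p \<Rightarrow> 'p \<Rightarrow> 'w set \<Rightarrow> ('p form \<Rightarrow> 'w set) \<Rightarrow> bool" where
  "truth_valuation TT FF \<Omega> t \<longleftrightarrow>
     (\<forall>a. t a \<subseteq> \<Omega>) \<and> t (Atom TT) = \<Omega> \<and> t (Atom FF) = {}"

definition exact_tv :: "'p \<Rightarrow> 'p \<Rightarrow> ('p form \<Rightarrow> 'w set) \<Rightarrow> bool" where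
  "exact_tv TT FF t \<longleftrightarrow> (\<forall>a c. equivf TT FF a c \<longrightarrow> t a = t c)"

definition monotone_tv :: "'p \<Rightarrow> 'p \<Rightarrow> ('p form \<Rightarrow> 'w set) \<Rightarrow> bool" where
  "monotone_tv TT FF t \<longleftrightarrow> (\<forall>a c. entails TT FF a c \<longrightarrow> t a \<subseteq> t c)"

definition symmetric_tv :: "'w set \<Rightarrow> ('p form \<Rightarrow> 'w set) \<Rightarrow> bool" where
  "symmetric_tv \<Omega> t \<longleftrightarrow> (\<forall>a. t (Neg a) = \<Omega> - t a)"

definition conj_distributive_tv :: "('p form \<Rightarrow> 'w set) \<Rightarrow> bool" where
  "conj_distributive_tv t \<longleftrightarrow> (\<forall>a c. t (Conj a c) = t a \<inter> t c)"

definition sound_tv :: "'p \<Rightarrow> 'p \<Rightarrow> 'w set \<Rightarrow> ('p form \<Rightarrow> 'w set) \<Rightarrow> bool" where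
  "sound_tv TT FF \<Omega> t \<longleftrightarrow>
     exact_tv TT FF t \<and> monotone_tv TT FF t \<and> symmetric_tv \<Omega> t \<and> conj_distributive_tv t"

definition likelihood_appraisal :: "'w set \<Rightarrow> 'w set set \<Rightarrow> ('w set \<Rightarrow> real) \<Rightarrow> bool" where
  "likelihood_appraisal \<Omega> \<Sigma> lam \<longleftrightarrow>
     algebra \<Omega> \<Sigma> \<and> (\<forall>A\<in>\<Sigma>. 0 \<le> lam A \<and> lam A \<le> 1) \<and> lam {} = 0 \<and> lam \<Omega> = 1"

definition additive_la :: "'w set set \<Rightarrow> ('w set \<Rightarrow> real) \<Rightarrow> bool" where
  "additive_la \<Sigma> lam \<longleftrightarrow>
     (\<forall>A\<in>\<Sigma>. \<forall>B\<in>\<Sigma>. A \<inter> B = {} \<longrightarrow> lam (A \<union> B) = lam A + lam B)"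

definition subjective_model :: "'p \<Rightarrow> 'p \<Rightarrow> 'w set \<Rightarrow> ('p form \<Rightarrow> 'w set) \<Rightarrow> 'w set set \<Rightarrow> ('w set \<Rightarrow> real) \<Rightarrow> bool" where
  "subjective_model TT FF \<Omega> t \<Sigma> lam \<longleftrightarrow>
     truth_valuation TT FF \<Omega> t \<and> likelihood_appraisal \<Omega> \<Sigma> lam \<and> range t \<subseteq> \<Sigma>"

definition value_of :: "('p form \<Rightarrow> 'w set) \<Rightarrow> ('w set \<Rightarrow> real) \<Rightarrow> ('p form \<Rightarrow> real) \<Rightarrow> real" where
  "value_of t lam b = (\<Sum>a\<in>supp b. b a * lam (t a))"

definition represents :: "('p form \<Rightarrow> 'w set) \<Rightarrow> ('w set \<Rightarrow> real) \<Rightarrow> 'p pref \<Rightarrow> bool" where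
  "represents t lam R \<longleftrightarrow>
     (\<forall>b\<in>bets. \<forall>b'\<in>bets. R b b' \<longleftrightarrow> value_of t lam b \<ge> value_of t lam b')"

end

theory Submission
  imports Defs
begin

(* By the von Neumann-Morgenstern argument, Objective Expected Utility and Non-Triviality make
   every bet b indifferent to exactly one calibration lottery calib x, which bets on T with
   weight x and on F with weight 1 - x. Writing u a for the weight calibrating the sure bet on a,
   Independence propagates this along mixtures: b is indifferent to calib (sum of b a * u a), so
   expected u-utility represents the preference, and Equivalence makes u constant on classes of
   equivalent formulas. Conversely, any model with an exact truth valuation yields such a
   representing utility u = lam o t. Finally, u is realised by two models: t a = [0, u a) in [0, 1)
   with Lebesgue measure (exact and additive), and t a = the admissible valuations satisfying a
   (sound), where lam (t a) = u a is well defined because t a = t c exactly when a and c are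
   equivalent. *)

definition expected_utility :: "('p form \<Rightarrow> real) \<Rightarrow> ('p form \<Rightarrow> real) \<Rightarrow> real" where
  "expected_utility u b = (\<Sum>a\<in>supp b. b a * u a)"

definition utility_represents :: "('p form \<Rightarrow> real) \<Rightarrow> 'p pref \<Rightarrow> bool" where
  "utility_represents u R \<longleftrightarrow>
     (\<forall>b\<in>bets. \<forall>b'\<in>bets. R b b' \<longleftrightarrow> expected_utility u b' \<le> expected_utility u b)"

definition normalized_utility :: "'p \<Rightarrow> 'p \<Rightarrow> ('p form \<Rightarrow> real) \<Rightarrow> bool" where
  "normalized_utility TT FF u \<longleftrightarrow>
     (\<forall>a. 0 \<le> u a \<and> u a \<le> 1) \<and> u (Atom TT) = 1 \<and> u (Atom FF) = 0
     \<and> (\<forall>a c. equivf TT FF a c \<longrightarrow> u a = u c)"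

lemma represents_iff_utility_represents:
  "represents t lam R \<longleftrightarrow> utility_represents (\<lambda>a. lam (t a)) R"
  by (simp add: represents_def utility_represents_def value_of_def expected_utility_def)

lemma is_betD:
  assumes "is_bet b"
  shows "finite (supp b)" "0 \<le> b a" "b a \<le> 1" "sum b (supp b) = 1"
  using assms unfolding is_bet_def by blast+

lemma sum_supp_superset:
  assumes "finite S" "supp b \<subseteq> S"
  shows "sum b S = sum b (supp b)"
  by (rule sum.mono_neutral_right) (use assms in \<open>auto simp: supp_def\<close>)

lemma expected_utility_superset:
  assumes "finite S" "supp b \<subseteq> S"
  shows "expected_utility u b = (\<Sum>a\<in>S. b a * u a)"
  unfolding expected_utility_def
  by (rule sum.mono_neutral_left) (use assms in \<open>auto simp: supp_def\<close>)

lemma mix_0 [simp]: "mix 0 b b' = b'"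
  and mix_1 [simp]: "mix 1 b b' = b"
  and mix_same [simp]: "mix \<alpha> b b = b"
  by (simp_all add: mix_def algebra_simps)

lemma mix_swap: "mix \<alpha> b b' = mix (1 - \<alpha>) b' b"
  by (simp add: mix_def algebra_simps fun_eq_iff)

lemma supp_mix_subset: "supp (mix \<alpha> b b') \<subseteq> supp b \<union> supp b'"
  by (auto simp: supp_def mix_def)

lemma is_bet_mix:
  assumes b: "is_bet b" and b': "is_bet b'" and \<alpha>: "0 \<le> \<alpha>" "\<alpha> \<le> 1"
  shows "is_bet (mix \<alpha> b b')"
proof -
  let ?S = "supp b \<union> supp b'"
  have fin: "finite ?S" using is_betD(1)[OF b] is_betD(1)[OF b'] by simp
  have "0 \<le> mix \<alpha> b b' a \<and> mix \<alpha> b b' a \<le> 1" for a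
    using is_betD(2,3)[OF b, of a] is_betD(2,3)[OF b', of a] \<alpha>
    by (simp add: mix_def convex_bound_le)
  moreover have "sum (mix \<alpha> b b') ?S = \<alpha> * sum b ?S + (1 - \<alpha>) * sum b' ?S"
    by (simp add: mix_def sum.distrib sum_distrib_left)
  ultimately show ?thesis
    using sum_supp_superset[OF fin supp_mix_subset] finite_subset[OF supp_mix_subset fin]
      sum_supp_superset[OF fin, of b] sum_supp_superset[OF fin, of b'] is_betD(4)[OF b] is_betD(4)[OF b']
    by (simp add: is_bet_def)
qed

lemma mix_in_bets: "b \<in> bets \<Longrightarrow> b' \<in> bets \<Longrightarrow> 0 \<le> \<alpha> \<Longrightarrow> \<alpha> \<le> 1 \<Longrightarrow> mix \<alpha> b b' \<in> bets"
  by (simp add: bets_def is_bet_mix)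

lemma expected_utility_mix:
  assumes "is_bet b" "is_bet b'"
  shows "expected_utility u (mix \<alpha> b b') = \<alpha> * expected_utility u b + (1 - \<alpha>) * expected_utility u b'"
proof -
  let ?S = "supp b \<union> supp b'"
  have fin: "finite ?S" using is_betD(1)[OF assms(1)] is_betD(1)[OF assms(2)] by simp
  have "(\<Sum>a\<in>?S. mix \<alpha> b b' a * u a) = \<alpha> * (\<Sum>a\<in>?S. b a * u a) + (1 - \<alpha>) * (\<Sum>a\<in>?S. b' a * u a)"
    by (simp add: mix_def sum.distrib sum_distrib_left distrib_right mult.assoc)
  then show ?thesis
    using expected_utility_superset[OF fin supp_mix_subset]
      expected_utility_superset[OF fin, of b] expected_utility_superset[OF fin, of b'] by simp
qed

lemma supp_bet_on: "supp (bet_on a) = {a}"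
  by (auto simp: supp_def bet_on_def)

lemma is_bet_bet_on: "is_bet (bet_on a)"
  unfolding is_bet_def supp_bet_on by (simp add: bet_on_def)

lemma bet_on_in_bets: "bet_on a \<in> bets"
  by (simp add: bets_def is_bet_bet_on)

lemma expected_utility_bet_on: "expected_utility u (bet_on a) = u a"
  unfolding expected_utility_def supp_bet_on by (simp add: bet_on_def)

lemma expected_utility_bounds:
  assumes b: "is_bet b" and u: "\<And>a. 0 \<le> u a \<and> u a \<le> 1"
  shows "0 \<le> expected_utility u b \<and> expected_utility u b \<le> 1"
proof
  show "0 \<le> expected_utility u b"
    unfolding expected_utility_def using is_betD(2)[OF b] u by (simp add: sum_nonneg)
  have "expected_utility u b \<le> (\<Sum>a\<in>supp b. b a)"
    unfolding expected_utility_def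
    using is_betD(2)[OF b] u by (intro sum_mono) (simp add: mult_left_le)
  then show "expected_utility u b \<le> 1" using is_betD(4)[OF b] by simp
qed

lemma is_bet_remove:
  assumes b: "is_bet b" and a: "b a < 1"
  shows "is_bet (\<lambda>c. if c = a then 0 else b c / (1 - b a))" (is "is_bet ?b'")
proof -
  have fin: "finite (supp b)" and nonneg: "\<And>c. 0 \<le> b c" using is_betD[OF b] by auto
  have supp': "supp ?b' = supp b - {a}" using a by (auto simp: supp_def)
  have rest: "sum b (supp b - {a}) = 1 - b a"
    using sum.remove[OF fin, of a b] is_betD(4)[OF b] by (cases "a \<in> supp b") (auto simp: supp_def)
  have "b c \<le> 1 - b a" if "c \<noteq> a" for c
  proof (cases "c \<in> supp b")
    case True
    then show ?thesis using member_le_sum[of c "supp b - {a}" b] nonneg fin that rest by simp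
  next
    case False
    then show ?thesis using a by (simp add: supp_def)
  qed
  moreover have "sum ?b' (supp ?b') = 1"
    using rest a unfolding supp' by (simp add: sum_divide_distrib[symmetric])
  ultimately show ?thesis
    using fin nonneg a unfolding is_bet_def supp' by auto
qed

lemma bet_induct [consumes 1, case_names bet_on mix]:
  assumes "is_bet b"
    and bet_on: "\<And>a. P (bet_on a)"
    and mix: "\<And>p a b'. is_bet b' \<Longrightarrow> 0 < p \<Longrightarrow> p < 1 \<Longrightarrow> P b' \<Longrightarrow> P (mix p (bet_on a) b')"
  shows "P b"
  using assms(1)
proof (induction "card (supp b)" arbitrary: b rule: less_induct)
  case less
  note b = is_betD[OF less.prems]
  obtain a where a: "a \<in> supp b" using b(4) by fastforce
  show ?case
  proof (cases "b a = 1")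
    case True
    have "sum b (supp b - {a}) = 0"
      using sum.remove[OF b(1) a, of b] b(4) True by simp
    then have "b c = 0" if "c \<noteq> a" for c
      using sum_nonneg_eq_0_iff[of "supp b - {a}" b] b(1,2) that by (auto simp: supp_def)
    then have "b = bet_on a" using True by (auto simp: bet_on_def)
    then show ?thesis using bet_on by simp
  next
    case False
    define b' where "b' c = (if c = a then 0 else b c / (1 - b a))" for c
    have p: "0 < b a" "b a < 1" using a b(2,3) False by (auto simp: supp_def order.order_iff_strict)
    have "is_bet b'" unfolding b'_def using is_bet_remove[OF less.prems p(2)] .
    moreover have "card (supp b') < card (supp b)"
      using a b(1) p(2) by (intro psubset_card_mono) (auto simp: supp_def b'_def)
    moreover have "b = mix (b a) (bet_on a) b'"
      using p by (auto simp: fun_eq_iff mix_def bet_on_def b'_def)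
    ultimately show ?thesis using less.hyps mix p by metis
  qed
qed

lemma objective_expected_utility_if_utility_represents:
  fixes u :: "'p form \<Rightarrow> real" and R :: "'p pref"
  assumes rep: "utility_represents u R"
  shows "objective_expected_utility R"
proof -
  let ?U = "expected_utility u"
  have pref: "R b b' \<longleftrightarrow> ?U b' \<le> ?U b" if "b \<in> bets" "b' \<in> bets" for b b'
    using rep that by (simp add: utility_represents_def)
  have strict: "strict R b b' \<longleftrightarrow> ?U b' < ?U b" if "b \<in> bets" "b' \<in> bets" for b b'
    using pref[OF that] pref[OF that(2,1)] by (auto simp: strict_def)
  have U_mix: "?U (mix \<alpha> b b'') = ?U b'' + \<alpha> * (?U b - ?U b'')"
    if "b \<in> bets" "b'' \<in> bets" for \<alpha> and b b'' :: "'p form \<Rightarrow> real"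
    using expected_utility_mix that by (simp add: bets_def algebra_simps)
  have "independence_pref R"
    unfolding independence_pref_def
  proof (intro ballI)
    fix b b' b'' :: "'p form \<Rightarrow> real" and \<alpha> :: real
    assume bets: "b \<in> bets" "b' \<in> bets" "b'' \<in> bets" and \<alpha>: "\<alpha> \<in> {0<..<1}"
    then have "R (mix \<alpha> b b'') (mix \<alpha> b' b'') \<longleftrightarrow> \<alpha> * ?U b' \<le> \<alpha> * ?U b"
      by (simp add: pref mix_in_bets U_mix algebra_simps)
    then show "R b b' \<longleftrightarrow> R (mix \<alpha> b b'') (mix \<alpha> b' b'')"
      using \<alpha> bets by (simp add: pref)
  qed
  moreover have "archimedean_pref R"
    unfolding archimedean_pref_def
  proof (intro ballI impI)
    fix b b' b'' :: "'p form \<Rightarrow> real"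
    assume bets: "b \<in> bets" "b' \<in> bets" "b'' \<in> bets"
      and "strict R b b'" "strict R b' b''"
    then have order: "?U b'' < ?U b'" "?U b' < ?U b" by (simp_all add: strict)
    define q where "q = (?U b' - ?U b'') / (?U b - ?U b'')"
    have q: "0 < q" "q < 1" using order by (simp_all add: q_def)
    have q_eq: "?U b' = ?U b'' + q * (?U b - ?U b'')" using order by (simp add: q_def)
    have "?U b' < ?U (mix ((1 + q) / 2) b b'')" "?U (mix (q / 2) b b'') < ?U b'"
      using order q unfolding q_eq U_mix[OF bets(1,3)] by (simp_all add: field_simps)
    moreover have "(1 + q) / 2 \<in> {0<..<1}" "q / 2 \<in> {0<..<1}" using q by auto
    ultimately show "\<exists>\<alpha>\<in>{0<..<1}. \<exists>\<beta>\<in>{0<..<1}. strict R (mix \<alpha> b b'') b' \<and> strict R b' (mix \<beta> b b'')"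
      using bets by (force simp: strict mix_in_bets)
  qed
  ultimately show ?thesis
    unfolding objective_expected_utility_def complete_pref_def transitive_pref_def
    by (auto simp: pref)
qed

lemma axioms_if_utility_represents:
  assumes u: "normalized_utility TT FF u" and rep: "utility_represents u R"
  shows "non_triviality TT FF R \<and> objective_expected_utility R \<and> equivalence_axiom TT FF R"
proof -
  have pref_bet_on: "R (bet_on a) (bet_on c) \<longleftrightarrow> u c \<le> u a" for a c
    using rep bet_on_in_bets[of a] bet_on_in_bets[of c]
    unfolding utility_represents_def by (simp add: expected_utility_bet_on)
  have "non_triviality TT FF R"
    using u by (simp add: non_triviality_def strict_def pref_bet_on normalized_utility_def)
  moreover have "equivalence_axiom TT FF R"
    using u by (simp add: equivalence_axiom_def indiff_def pref_bet_on normalized_utility_def)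
  ultimately show ?thesis using objective_expected_utility_if_utility_represents[OF rep] by blast
qed

lemma normalized_utility_of_model:
  assumes "subjective_model TT FF \<Omega> t \<Sigma> lam" "exact_tv TT FF t"
  shows "normalized_utility TT FF (\<lambda>a. lam (t a))"
proof -
  have "t a \<in> \<Sigma>" for a using assms(1) by (auto simp: subjective_model_def)
  then show ?thesis
    using assms
    by (auto simp: normalized_utility_def subjective_model_def truth_valuation_def
        likelihood_appraisal_def exact_tv_def)
qed

lemma axioms_if_exact_model:
  assumes "subjective_model TT FF \<Omega> t \<Sigma> lam" "exact_tv TT FF t" "represents t lam R"
  shows "non_triviality TT FF R \<and> objective_expected_utility R \<and> equivalence_axiom TT FF R"
  using assms axioms_if_utility_represents normalized_utility_of_model
  by (metis represents_iff_utility_represents)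

locale bet_preference =
  fixes R :: "'p pref" and TT FF :: 'p
  assumes non_triviality: "non_triviality TT FF R"
    and objective_expected_utility: "objective_expected_utility R"
    and equivalence: "equivalence_axiom TT FF R"
begin

lemma pref_complete: "b \<in> bets \<Longrightarrow> b' \<in> bets \<Longrightarrow> R b b' \<or> R b' b"
  using objective_expected_utility by (simp add: objective_expected_utility_def complete_pref_def)

lemma pref_refl: "b \<in> bets \<Longrightarrow> R b b"
  using pref_complete by blast

lemma pref_trans: "b \<in> bets \<Longrightarrow> b' \<in> bets \<Longrightarrow> b'' \<in> bets \<Longrightarrow> R b b' \<Longrightarrow> R b' b'' \<Longrightarrow> R b b''"
  using objective_expected_utility
  unfolding objective_expected_utility_def transitive_pref_def by blast

lemma pref_strict_trans:
  "b \<in> bets \<Longrightarrow> b' \<in> bets \<Longrightarrow> b'' \<in> bets \<Longrightarrow> R b b' \<Longrightarrow> strict R b' b'' \<Longrightarrow> strict R b b''"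
  unfolding strict_def using pref_trans by blast

lemma indiff_trans:
  "b \<in> bets \<Longrightarrow> b' \<in> bets \<Longrightarrow> b'' \<in> bets \<Longrightarrow> indiff R b b' \<Longrightarrow> indiff R b' b'' \<Longrightarrow> indiff R b b''"
  unfolding indiff_def using pref_trans by blast

lemma pref_independence:
  "b \<in> bets \<Longrightarrow> b' \<in> bets \<Longrightarrow> b'' \<in> bets \<Longrightarrow> 0 < \<alpha> \<Longrightarrow> \<alpha> < 1 \<Longrightarrow>
   R b b' \<longleftrightarrow> R (mix \<alpha> b b'') (mix \<alpha> b' b'')"
  using objective_expected_utility
  unfolding objective_expected_utility_def independence_pref_def
  by (meson greaterThanLessThan_iff)

lemma pref_archimedean:
  "b \<in> bets \<Longrightarrow> b' \<in> bets \<Longrightarrow> b'' \<in> bets \<Longrightarrow> strict R b b' \<Longrightarrow> strict R b' b'' \<Longrightarrow>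
   \<exists>\<alpha>\<in>{0<..<1}. \<exists>\<beta>\<in>{0<..<1}. strict R (mix \<alpha> b b'') b' \<and> strict R b' (mix \<beta> b b'')"
  using objective_expected_utility
  unfolding objective_expected_utility_def archimedean_pref_def by blast

lemma strict_mix:
  assumes "b \<in> bets" "b' \<in> bets" "b'' \<in> bets" "0 < \<alpha>" "\<alpha> \<le> 1" "strict R b b'"
  shows "strict R (mix \<alpha> b b'') (mix \<alpha> b' b'')"
  using assms pref_independence[of b b' b'' \<alpha>] pref_independence[of b' b b'' \<alpha>]
  by (cases "\<alpha> = 1") (auto simp: strict_def)

lemma indiff_mix_left:
  assumes "b \<in> bets" "b' \<in> bets" "b'' \<in> bets" "0 \<le> \<alpha>" "\<alpha> \<le> 1" "indiff R b b'"
  shows "indiff R (mix \<alpha> b b'') (mix \<alpha> b' b'')"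
  using assms pref_independence[of b b' b'' \<alpha>] pref_independence[of b' b b'' \<alpha>] pref_refl[of b'']
  by (cases "\<alpha> = 0 \<or> \<alpha> = 1") (auto simp: indiff_def)

lemma indiff_mix:
  assumes bets: "b1 \<in> bets" "b2 \<in> bets" "c1 \<in> bets" "c2 \<in> bets" and \<alpha>: "0 \<le> \<alpha>" "\<alpha> \<le> 1"
    and "indiff R b1 c1" "indiff R b2 c2"
  shows "indiff R (mix \<alpha> b1 b2) (mix \<alpha> c1 c2)"
proof -
  have "indiff R (mix \<alpha> b1 b2) (mix \<alpha> c1 b2)"
    using assms by (intro indiff_mix_left) auto
  moreover have "indiff R (mix (1 - \<alpha>) b2 c1) (mix (1 - \<alpha>) c2 c1)"
    using assms by (intro indiff_mix_left) auto
  ultimately show ?thesis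
    using indiff_trans bets \<alpha> mix_swap[of \<alpha> c1] by (metis mix_in_bets)
qed

definition calib :: "real \<Rightarrow> 'p form \<Rightarrow> real" where
  "calib x = mix x (bet_on (Atom TT)) (bet_on (Atom FF))"

lemma calib_0: "calib 0 = bet_on (Atom FF)" and calib_1: "calib 1 = bet_on (Atom TT)"
  by (simp_all add: calib_def)

lemma calib_in_bets: "0 \<le> x \<Longrightarrow> x \<le> 1 \<Longrightarrow> calib x \<in> bets"
  unfolding calib_def by (intro mix_in_bets bet_on_in_bets)

lemma mix_calib: "mix \<alpha> (calib x) (calib y) = calib (\<alpha> * x + (1 - \<alpha>) * y)"
  by (simp add: calib_def mix_def fun_eq_iff algebra_simps)

lemma calib_strict_mono:
  assumes "0 \<le> y" "y < x" "x \<le> 1"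
  shows "strict R (calib x) (calib y)"
proof -
  have "strict R (calib x) (calib 0)"
    using strict_mix[OF bet_on_in_bets bet_on_in_bets bet_on_in_bets, of x "Atom TT" "Atom FF" "Atom FF"]
      non_triviality assms
    by (simp add: calib_def non_triviality_def)
  then have "strict R (mix (1 - y / x) (calib x) (calib x)) (mix (1 - y / x) (calib 0) (calib x))"
    using assms by (intro strict_mix calib_in_bets) auto
  then show ?thesis
    using assms by (simp add: mix_calib field_simps)
qed

lemma calib_pref_iff:
  assumes "0 \<le> x" "x \<le> 1" "0 \<le> y" "y \<le> 1"
  shows "R (calib x) (calib y) \<longleftrightarrow> y \<le> x"
  using assms calib_strict_mono[of x y] calib_strict_mono[of y x] pref_refl[OF calib_in_bets]
  by (cases x y rule: linorder_cases) (auto simp: strict_def)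

lemma calib_indiff_unique:
  assumes b: "b \<in> bets" and x: "0 \<le> x" "x \<le> 1" and y: "0 \<le> y" "y \<le> 1"
    and "indiff R b (calib x)" "indiff R b (calib y)"
  shows "x = y"
proof -
  have "indiff R (calib x) (calib y)"
    using assms indiff_trans[OF calib_in_bets[OF x] b calib_in_bets[OF y]] by (simp add: indiff_def)
  then show ?thesis using calib_pref_iff[OF x y] calib_pref_iff[OF y x] by (simp add: indiff_def)
qed

lemma exists_calib_above:
  assumes b: "b \<in> bets" "R (bet_on (Atom TT)) b" and s: "0 \<le> s" "s \<le> 1"
    and b_s: "strict R b (calib s)"
  shows "\<exists>x. s < x \<and> x \<le> 1 \<and> R b (calib x)"
proof -
  have "s \<noteq> 1" using b(2) b_s by (auto simp: strict_def calib_1)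
  with s have "s < 1" by simp
  show ?thesis
  proof (cases "R b (calib 1)")
    case True
    with \<open>s < 1\<close> show ?thesis by blast
  next
    case False
    with b(2) have one_b: "strict R (calib 1) b" by (simp add: strict_def calib_1)
    obtain \<beta> where \<beta>: "0 < \<beta>" "\<beta> < 1" "strict R b (mix \<beta> (calib 1) (calib s))"
      using pref_archimedean[OF calib_in_bets b(1) calib_in_bets one_b b_s] s by force
    have "s < \<beta> + (1 - \<beta>) * s"
      using mult_strict_left_mono[OF \<open>s < 1\<close> \<beta>(1)] by (simp add: algebra_simps)
    moreover have "(1 - \<beta>) * s \<le> 1 - \<beta>"
      using \<beta>(2) s(2) by (simp add: mult_left_le)
    moreover have "R b (calib (\<beta> + (1 - \<beta>) * s))"
      using \<beta>(3) by (simp add: mix_calib strict_def)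
    ultimately show ?thesis by (intro exI[of _ "\<beta> + (1 - \<beta>) * s"]) simp
  qed
qed

lemma exists_calib_below:
  assumes b: "b \<in> bets" "R b (bet_on (Atom FF))" and s: "0 \<le> s" "s \<le> 1"
    and s_b: "strict R (calib s) b"
  shows "\<exists>x. 0 \<le> x \<and> x < s \<and> R (calib x) b"
proof -
  have "s \<noteq> 0" using b(2) s_b by (auto simp: strict_def calib_0)
  with s have "0 < s" by simp
  show ?thesis
  proof (cases "R (calib 0) b")
    case True
    with \<open>0 < s\<close> show ?thesis by blast
  next
    case False
    with b(2) have b_zero: "strict R b (calib 0)" by (simp add: strict_def calib_0)
    obtain \<alpha> where \<alpha>: "0 < \<alpha>" "\<alpha> < 1" "strict R (mix \<alpha> (calib s) (calib 0)) b"
      using pref_archimedean[OF calib_in_bets b(1) calib_in_bets s_b b_zero] s by force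
    have "\<alpha> * s < s" using mult_strict_right_mono[OF \<alpha>(2) \<open>0 < s\<close>] by simp
    moreover have "R (calib (\<alpha> * s)) b" using \<alpha>(3) by (simp add: mix_calib strict_def)
    ultimately show ?thesis using \<alpha>(1) s(1) by (intro exI[of _ "\<alpha> * s"]) simp
  qed
qed

(* The calibration weight of b is the supremum of the weights x with b \<succeq> calib x;
   at the supremum the Archimedean axiom rules out a strict preference either way. *)
lemma exists_calib_indiff:
  assumes b: "b \<in> bets" "R (bet_on (Atom TT)) b" "R b (bet_on (Atom FF))"
  shows "\<exists>x. 0 \<le> x \<and> x \<le> 1 \<and> indiff R b (calib x)"
proof -
  define S where "S = {x. 0 \<le> x \<and> x \<le> 1 \<and> R b (calib x)}"
  define s where "s = Sup S"
  have "0 \<in> S" using b(3) by (simp add: S_def calib_0)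
  then have S_ne: "S \<noteq> {}" by blast
  have bdd: "bdd_above S" unfolding S_def by (rule bdd_aboveI[of _ 1]) simp
  have upper: "x \<le> s" if "x \<in> S" for x using cSup_upper[OF that bdd] by (simp add: s_def)
  have s: "0 \<le> s" "s \<le> 1"
    using upper[OF \<open>0 \<in> S\<close>] cSup_least[OF S_ne, of 1] by (auto simp: s_def S_def)
  have "R (calib s) b"
  proof (rule ccontr)
    assume "\<not> R (calib s) b"
    then have "strict R b (calib s)"
      using pref_complete[OF b(1) calib_in_bets[OF s]] by (simp add: strict_def)
    then obtain x where "s < x" "x \<le> 1" "R b (calib x)" using exists_calib_above[OF b(1,2) s] by blast
    then show False using upper[of x] s by (simp add: S_def)
  qed
  moreover have "R b (calib s)"
  proof (rule ccontr)
    assume "\<not> R b (calib s)"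
    then have "strict R (calib s) b"
      using pref_complete[OF b(1) calib_in_bets[OF s]] by (simp add: strict_def)
    then obtain x where x: "0 \<le> x" "x < s" "R (calib x) b" using exists_calib_below[OF b(1,3) s] by blast
    then have "x < Sup S" by (simp add: s_def)
    then obtain y where y: "y \<in> S" "x < y" using less_cSup_iff[OF S_ne bdd] by blast
    then have y01: "0 \<le> y" "y \<le> 1" and "R b (calib y)" by (simp_all add: S_def)
    moreover have "strict R (calib y) (calib x)" using calib_strict_mono x y y01 by simp
    ultimately have "strict R b (calib x)"
      using pref_strict_trans[OF b(1) calib_in_bets[OF y01] calib_in_bets] x y by simp
    then show False using x by (simp add: strict_def)
  qed
  ultimately show ?thesis using s by (auto simp: indiff_def)
qed

definition utility :: "'p form \<Rightarrow> real" where
  "utility a = (SOME x. 0 \<le> x \<and> x \<le> 1 \<and> indiff R (bet_on a) (calib x))"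

lemma utility_calib: "0 \<le> utility a \<and> utility a \<le> 1 \<and> indiff R (bet_on a) (calib (utility a))"
  unfolding utility_def
  by (rule someI_ex, rule exists_calib_indiff[OF bet_on_in_bets])
    (use non_triviality in \<open>simp_all add: non_triviality_def\<close>)

lemma utility_eqI: "0 \<le> x \<Longrightarrow> x \<le> 1 \<Longrightarrow> indiff R (bet_on a) (calib x) \<Longrightarrow> utility a = x"
  using calib_indiff_unique[OF bet_on_in_bets] utility_calib by blast

lemma utility_normalized: "normalized_utility TT FF utility"
proof -
  have "utility (Atom TT) = 1" "utility (Atom FF) = 0"
    by (auto intro!: utility_eqI simp: calib_0 calib_1 indiff_def pref_refl bet_on_in_bets)
  moreover have "utility a = utility c" if "equivf TT FF a c" for a c
  proof (rule utility_eqI)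
    have "indiff R (bet_on a) (bet_on c)" using equivalence that by (simp add: equivalence_axiom_def)
    then show "indiff R (bet_on a) (calib (utility c))"
      using indiff_trans[OF bet_on_in_bets bet_on_in_bets calib_in_bets] utility_calib by blast
  qed (use utility_calib in auto)
  ultimately show ?thesis using utility_calib by (simp add: normalized_utility_def)
qed

lemma expected_utility_unit_interval:
  "b \<in> bets \<Longrightarrow> 0 \<le> expected_utility utility b \<and> expected_utility utility b \<le> 1"
  by (intro expected_utility_bounds) (simp_all add: bets_def utility_calib)

lemma bet_indiff_calib: "is_bet b \<Longrightarrow> indiff R b (calib (expected_utility utility b))"
proof (induction rule: bet_induct)
  case (bet_on a)
  then show ?case using utility_calib by (simp add: expected_utility_bet_on)
next
  case (mix p a b')
  have "0 \<le> expected_utility utility b' \<and> expected_utility utility b' \<le> 1"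
    using expected_utility_unit_interval mix.hyps(1) by (simp add: bets_def)
  then have "indiff R (mix p (bet_on a) b') (mix p (calib (utility a)) (calib (expected_utility utility b')))"
    using mix utility_calib[of a] by (intro indiff_mix bet_on_in_bets calib_in_bets) (auto simp: bets_def)
  then show ?case
    using expected_utility_mix[OF is_bet_bet_on mix.hyps(1)]
    by (simp add: mix_calib expected_utility_bet_on)
qed

lemma utility_represents_preference: "utility_represents utility R"
  unfolding utility_represents_def
proof (intro ballI)
  fix b b' :: "'p form \<Rightarrow> real" assume b: "b \<in> bets" and b': "b' \<in> bets"
  let ?x = "expected_utility utility b" and ?y = "expected_utility utility b'"
  have x: "0 \<le> ?x" "?x \<le> 1" and y: "0 \<le> ?y" "?y \<le> 1"
    using expected_utility_unit_interval[OF b] expected_utility_unit_interval[OF b'] by auto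
  have "indiff R b (calib ?x)" "indiff R b' (calib ?y)"
    using b b' bet_indiff_calib by (simp_all add: bets_def)
  then have "R b b' \<longleftrightarrow> R (calib ?x) (calib ?y)"
    using b b' calib_in_bets[OF x] calib_in_bets[OF y] unfolding indiff_def by (meson pref_trans)
  also have "\<dots> \<longleftrightarrow> ?y \<le> ?x" using calib_pref_iff[OF x y] .
  finally show "R b b' \<longleftrightarrow> ?y \<le> ?x" .
qed

end

lemma axioms_iff_exists_utility:
  "non_triviality TT FF R \<and> objective_expected_utility R \<and> equivalence_axiom TT FF R
   \<longleftrightarrow> (\<exists>u. normalized_utility TT FF u \<and> utility_represents u R)"
  using axioms_if_utility_represents bet_preference.utility_normalized
    bet_preference.utility_represents_preference bet_preference.intro
  by metis

lemma sound_model_if_utility_represents: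
  fixes u :: "'p form \<Rightarrow> real"
  assumes u: "normalized_utility TT FF u" and rep: "utility_represents u R"
  shows "\<exists>(\<Omega>::('p \<Rightarrow> bool) set) t \<Sigma> lam. subjective_model TT FF \<Omega> t \<Sigma> lam
           \<and> sound_tv TT FF \<Omega> t \<and> represents t lam R"
proof -
  define \<Omega> :: "('p \<Rightarrow> bool) set" where "\<Omega> = {v. admissible TT FF v}"
  define t where "t a = {v \<in> \<Omega>. eval v a}" for a
  define lam where "lam A = u (SOME a. t a = A)" for A
  have t_eq_iff: "t a = t c \<longleftrightarrow> equivf TT FF a c" for a c
    by (auto simp: t_def \<Omega>_def equivf_def entails_def)
  have lam_t: "lam (t a) = u a" for a
  proof -
    have "t (SOME c. t c = t a) = t a" by (rule someI) (rule refl)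
    then show ?thesis using u by (simp add: lam_def t_eq_iff normalized_utility_def)
  qed
  have t_TT: "t (Atom TT) = \<Omega>" and t_FF: "t (Atom FF) = {}"
    by (auto simp: t_def \<Omega>_def admissible_def)
  have "lam {} = 0" "lam \<Omega> = 1"
    using lam_t[of "Atom FF"] lam_t[of "Atom TT"] u by (simp_all add: t_TT t_FF normalized_utility_def)
  then have "subjective_model TT FF \<Omega> t (Pow \<Omega>) lam"
    using u t_TT t_FF
    by (auto simp: subjective_model_def truth_valuation_def likelihood_appraisal_def algebra_Pow
        lam_def normalized_utility_def t_def)
  moreover have "sound_tv TT FF \<Omega> t"
    unfolding sound_tv_def exact_tv_def monotone_tv_def symmetric_tv_def conj_distributive_tv_def
    by (auto simp: t_def \<Omega>_def equivf_def entails_def)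
  moreover have "represents t lam R"
    using rep lam_t by (simp add: represents_iff_utility_represents)
  ultimately show ?thesis by blast
qed

lemma exact_additive_model_if_utility_represents:
  assumes u: "normalized_utility TT FF u" and rep: "utility_represents u R"
  shows "\<exists>(\<Omega>::real set) t \<Sigma> lam. subjective_model TT FF \<Omega> t \<Sigma> lam \<and> exact_tv TT FF t
           \<and> additive_la \<Sigma> lam \<and> represents t lam R"
proof -
  define \<Omega> :: "real set" where "\<Omega> = {0..<1}"
  define M where "M = restrict_space lborel \<Omega>"
  define t where "t a = {0..<u a}" for a
  have u_bounds: "0 \<le> u a" "u a \<le> 1" for a using u by (simp_all add: normalized_utility_def)
  have \<Omega>_sets: "\<Omega> \<inter> space lborel \<in> sets lborel" by (simp add: \<Omega>_def)
  have space_M: "space M = \<Omega>" by (simp add: M_def space_restrict_space)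
  have sets_M: "A \<in> sets M \<longleftrightarrow> A \<subseteq> \<Omega> \<and> A \<in> sets lborel" for A
    unfolding M_def using sets_restrict_space_iff[OF \<Omega>_sets] .
  have measure_M: "measure M A = measure lborel A" if "A \<subseteq> \<Omega>" for A
    unfolding M_def using measure_restrict_space[OF \<Omega>_sets that] .
  have "emeasure M (space M) = emeasure lborel \<Omega>"
    unfolding space_M unfolding M_def using emeasure_restrict_space[OF \<Omega>_sets order.refl] .
  then have M: "finite_measure M" by (intro finite_measureI) (simp add: \<Omega>_def)
  have t_subset: "t a \<subseteq> \<Omega>" for a using u_bounds[of a] by (auto simp: t_def \<Omega>_def)
  have "algebra \<Omega> (sets M)"
    using sets.sigma_algebra_axioms[of M] space_M by (simp add: sigma_algebra_iff)
  moreover have "measure M \<Omega> = 1" using measure_M[of \<Omega>] by (simp add: \<Omega>_def)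
  ultimately have "likelihood_appraisal \<Omega> (sets M) (measure M)"
    using finite_measure.bounded_measure[OF M] space_M by (auto simp: likelihood_appraisal_def)
  moreover have "truth_valuation TT FF \<Omega> t"
    using u t_subset by (simp add: truth_valuation_def t_def \<Omega>_def normalized_utility_def)
  moreover have "range t \<subseteq> sets M" using t_subset by (auto simp: sets_M t_def)
  moreover have "exact_tv TT FF t" using u by (simp add: exact_tv_def t_def normalized_utility_def)
  moreover have "additive_la (sets M) (measure M)"
    using finite_measure.finite_measure_Union[OF M] by (simp add: additive_la_def)
  moreover have "measure M (t a) = u a" for a
    using measure_M[OF t_subset] u_bounds[of a] by (simp add: t_def)
  then have "represents t (measure M) R"
    using rep by (simp add: represents_iff_utility_represents)
  ultimately show ?thesis unfolding subjective_model_def by blast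
qed

lemma axioms_iff_exact_additive_model:
  fixes R :: "'p pref"
  shows "non_triviality TT FF R \<and> objective_expected_utility R \<and> equivalence_axiom TT FF R
   \<longleftrightarrow> (\<exists>(\<Omega>::real set) t \<Sigma> lam. subjective_model TT FF \<Omega> t \<Sigma> lam \<and> exact_tv TT FF t
          \<and> additive_la \<Sigma> lam \<and> represents t lam R)"
  (is "?axioms \<longleftrightarrow> ?model")
proof
  assume ?axioms
  then obtain u where "normalized_utility TT FF u" "utility_represents u R"
    using axioms_iff_exists_utility[of TT FF R] by metis
  then show ?model by (rule exact_additive_model_if_utility_represents)
next
  assume ?model
  then show ?axioms by (metis axioms_if_exact_model)
qed

lemma axioms_iff_sound_model:
  fixes R :: "'p pref"
  shows "non_triviality TT FF R \<and> objective_expected_utility R \<and> equivalence_axiom TT FF R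
   \<longleftrightarrow> (\<exists>(\<Omega>::('p \<Rightarrow> bool) set) t \<Sigma> lam. subjective_model TT FF \<Omega> t \<Sigma> lam
          \<and> sound_tv TT FF \<Omega> t \<and> represents t lam R)"
  (is "?axioms \<longleftrightarrow> ?model")
proof
  assume ?axioms
  then obtain u where "normalized_utility TT FF u" "utility_represents u R"
    using axioms_iff_exists_utility[of TT FF R] by metis
  then show ?model by (rule sound_model_if_utility_represents)
next
  assume ?model
  then show ?axioms unfolding sound_tv_def by (metis axioms_if_exact_model)
qed

theorem proposition2:
  fixes R :: "'p pref" and TT FF :: 'p
  assumes "TT \<noteq> FF"
  shows
   "(non_triviality TT FF R \<and> objective_expected_utility R \<and> equivalence_axiom TT FF R
       \<longleftrightarrow> (\<exists>(\<Omega>::real set) t \<Sigma> lam. subjective_model TT FF \<Omega> t \<Sigma> lam \<and> exact_tv TT FF t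
                 \<and> additive_la \<Sigma> lam \<and> represents t lam R))
  \<and> (non_triviality TT FF R \<and> objective_expected_utility R \<and> equivalence_axiom TT FF R
       \<longleftrightarrow> (\<exists>(\<Omega>::('p \<Rightarrow> bool) set) t \<Sigma> lam. subjective_model TT FF \<Omega> t \<Sigma> lam
                 \<and> sound_tv TT FF \<Omega> t \<and> represents t lam R))
  \<and> (\<forall>(\<Omega>::'w set) t \<Sigma> lam. subjective_model TT FF \<Omega> t \<Sigma> lam \<and> exact_tv TT FF t
          \<and> additive_la \<Sigma> lam \<and> represents t lam R
        \<longrightarrow> non_triviality TT FF R \<and> objective_expected_utility R \<and> equivalence_axiom TT FF R)
  \<and> (\<forall>(\<Omega>::'w set) t \<Sigma> lam. subjective_model TT FF \<Omega> t \<Sigma> lam \<and> sound_tv TT FF \<Omega> t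
          \<and> represents t lam R
        \<longrightarrow> non_triviality TT FF R \<and> objective_expected_utility R \<and> equivalence_axiom TT FF R)"
  apply (intro conjI)
     apply (rule axioms_iff_exact_additive_model)
    apply (rule axioms_iff_sound_model)
   apply (intro allI impI, elim conjE, erule axioms_if_exact_model; assumption)
  apply (intro allI impI, elim conjE, erule axioms_if_exact_model; simp add: sound_tv_def)
  done

end
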